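(* Let $\Theta\subseteq\mathbb{R}^p$ be open and $\rho_\theta=|\psi_\theta\rangle\langle\psi_\theta|$, $\theta=(\theta^1,\dots,\theta^p)\in\Theta$, a non-degenerate differentiable family of pure states on $\mathbb{C}^d$. If at some $\theta$ there exists a POVM $M$ with $F^M_\theta=H_\theta$ (i.e. $H_\theta$ is attainable), then $p\le d-1$.
   Context: Non-degenerate means that for each $\theta$ the matrices $\partial\rho_\theta/\partial\theta^1,\dots,\partial\rho_\theta/\partial\theta^p$ are linearly independent over $\mathbb{R}$. $H_\theta$ is the SLD quantum information matrix, $(H_\theta)_{jk}=\mathrm{Re}\,\mathrm{tr}\{\lambda^j\rho_\theta\lambda^k\}$ with $\lambda^j$ Hermitian solving $\frac{\partial\rho_\theta}{\partial\theta^j}=\frac12(\rho_\theta\lambda^j+\lambda^j\rho_\theta)$. A POVM is a finite family $M=\{M_m\}$ of positive semidefinite matrices summing to $\mathbb{I}$; with $p(m;\theta)=\mathrm{tr}\{\rho_\theta M_m\}$, its Fisher information matrix is $(F^M_\theta)_{jk}=\sum_{m:p(m;\theta)>0}\frac{1}{p(m;\theta)}\frac{\partial p(m;\theta)}{\partial\theta^j}\frac{\partial p(m;\theta)}{\partial\theta^k}$. *)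

theory Defs
  imports "HOL-Analysis.Analysis"
begin

text \<open>Matrices on C^d are complex^'d^'d; parameters live in real^'p (p = CARD('p), d = CARD('d)).\<close>

definition adjoint_mat :: "complex^'d^'d \<Rightarrow> complex^'d^'d" where
  "adjoint_mat A = (\<chi> i j. cnj (A $ j $ i))"

definition hermitian_mat :: "complex^'d^'d \<Rightarrow> bool" where
  "hermitian_mat A \<longleftrightarrow> adjoint_mat A = A"

definition psd_mat :: "complex^'d^'d \<Rightarrow> bool" where
  "psd_mat A \<longleftrightarrow> (\<forall>x::complex^'d.
     let q = (\<Sum>i\<in>UNIV. \<Sum>j\<in>UNIV. cnj (x $ i) * A $ i $ j * x $ j) in Im q = 0 \<and> Re q \<ge> 0)"

definition ket_bra :: "complex^'d \<Rightarrow> complex^'d^'d" where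
  "ket_bra v = (\<chi> i j. v $ i * cnj (v $ j))"

definition partial_deriv :: "(real^'p \<Rightarrow> 'b::real_normed_vector) \<Rightarrow> real^'p \<Rightarrow> 'p \<Rightarrow> 'b" where
  "partial_deriv f \<theta> j = frechet_derivative f (at \<theta>) (axis j 1)"

definition nondegenerate :: "(real^'p \<Rightarrow> complex^'d^'d) \<Rightarrow> (real^'p) set \<Rightarrow> bool" where
  "nondegenerate \<rho> \<Theta> \<longleftrightarrow> (\<forall>\<theta>\<in>\<Theta>. \<forall>c::'p \<Rightarrow> real.
      (\<Sum>j\<in>UNIV. c j *\<^sub>R partial_deriv \<rho> \<theta> j) = 0 \<longrightarrow> (\<forall>j. c j = 0))"

definition is_SLD :: "(real^'p \<Rightarrow> complex^'d^'d) \<Rightarrow> real^'p \<Rightarrow> 'p \<Rightarrow> complex^'d^'d \<Rightarrow> bool" where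
  "is_SLD \<rho> \<theta> j L \<longleftrightarrow> hermitian_mat L \<and>
     partial_deriv \<rho> \<theta> j = (1/2::real) *\<^sub>R (\<rho> \<theta> ** L + L ** \<rho> \<theta>)"

definition SLD :: "(real^'p \<Rightarrow> complex^'d^'d) \<Rightarrow> real^'p \<Rightarrow> 'p \<Rightarrow> complex^'d^'d" where
  "SLD \<rho> \<theta> j = (SOME L. is_SLD \<rho> \<theta> j L)"

definition SLD_info :: "(real^'p \<Rightarrow> complex^'d^'d) \<Rightarrow> real^'p \<Rightarrow> 'p \<Rightarrow> 'p \<Rightarrow> real" where
  "SLD_info \<rho> \<theta> j k = Re (trace (SLD \<rho> \<theta> j ** \<rho> \<theta> ** SLD \<rho> \<theta> k))"

definition is_POVM :: "'m set \<Rightarrow> ('m \<Rightarrow> complex^'d^'d) \<Rightarrow> bool" where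
  "is_POVM I M \<longleftrightarrow> finite I \<and> (\<forall>m\<in>I. psd_mat (M m)) \<and> (\<Sum>m\<in>I. M m) = mat 1"

definition outcome_prob :: "(real^'p \<Rightarrow> complex^'d^'d) \<Rightarrow> ('m \<Rightarrow> complex^'d^'d) \<Rightarrow> 'm \<Rightarrow> real^'p \<Rightarrow> real" where
  "outcome_prob \<rho> M m \<theta> = Re (trace (\<rho> \<theta> ** M m))"

definition fisher_info :: "(real^'p \<Rightarrow> complex^'d^'d) \<Rightarrow> 'm set \<Rightarrow> ('m \<Rightarrow> complex^'d^'d)
    \<Rightarrow> real^'p \<Rightarrow> 'p \<Rightarrow> 'p \<Rightarrow> real" where
  "fisher_info \<rho> I M \<theta> j k =
     (\<Sum>m\<in>{m\<in>I. outcome_prob \<rho> M m \<theta> > 0}.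
        partial_deriv (outcome_prob \<rho> M m) \<theta> j * partial_deriv (outcome_prob \<rho> M m) \<theta> k
        / outcome_prob \<rho> M m \<theta>)"

end

theory Submission
  imports Defs "HOL-Library.Cardinality"
begin

text \<open>
  Let P = |\<psi>\<rangle>\<langle>\<psi>| be the state at \<theta> and L_j its SLDs. For every POVM element M_m the form
  (x, y) \<mapsto> \<langle>x, M_m y\<rangle> is positive semidefinite, and the diagonal entries of the two information
  matrices read H_jj = \<Sum>_m \<langle>L_j \<psi>, M_m L_j \<psi>\<rangle> and F_jj = \<Sum>_m (Re \<langle>\<psi>, M_m L_j \<psi>\<rangle>)^2 / \<langle>\<psi>, M_m \<psi>\<rangle>.
  Cauchy-Schwarz for each form gives F_jj \<le> H_jj termwise, so attainability forces equality in
  every term: M_m L_j \<psi> is a real multiple of M_m \<psi>. Summing over the POVM, the vectors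
  \<psi>, L_1 \<psi>, ..., L_p \<psi> have a real Gram matrix. They are also linearly independent over the reals:
  since \<partial>_j \<rho> = (|\<psi>\<rangle>\<langle>L_j \<psi>| + |L_j \<psi>\<rangle>\<langle>\<psi>|) / 2, a real relation among them exhibits a multiple of P
  as a combination of the \<partial>_j \<rho>, which tr \<partial>_j \<rho> = 0 and non-degeneracy rule out. A real-independent
  family with real Gram matrix stays independent after adjoining its multiples by \<i>, hence
  2 (p + 1) \<le> dim_\<real> \<complex>^d = 2 d.
\<close>

section \<open>The inner product on complex vectors\<close>

definition cinner :: "complex^'d \<Rightarrow> complex^'d \<Rightarrow> complex" where
  "cinner x y = (\<Sum>i\<in>UNIV. cnj (x$i) * y$i)"

lemma cinner_add_left: "cinner (x + y) z = cinner x z + cinner y z"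
  by (simp add: cinner_def algebra_simps sum.distrib)

lemma cinner_add_right: "cinner x (y + z) = cinner x y + cinner x z"
  by (simp add: cinner_def algebra_simps sum.distrib)

lemma cinner_diff_left: "cinner (x - y) z = cinner x z - cinner y z"
  by (simp add: cinner_def algebra_simps sum_subtractf)

lemma cinner_diff_right: "cinner x (y - z) = cinner x y - cinner x z"
  by (simp add: cinner_def algebra_simps sum_subtractf)

lemma cinner_scaleR_left: "cinner (r *\<^sub>R x) z = of_real r * cinner x z"
  unfolding cinner_def vector_scaleR_component by (simp add: scaleR_conv_of_real sum_distrib_left mult_ac)

lemma cinner_scaleR_right: "cinner x (r *\<^sub>R z) = of_real r * cinner x z"
  unfolding cinner_def vector_scaleR_component by (simp add: scaleR_conv_of_real sum_distrib_left mult_ac)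

lemma cinner_smult_left: "cinner (c *s x) z = cnj c * cinner x z"
  by (simp add: cinner_def sum_distrib_left mult_ac)

lemma cinner_smult_right: "cinner x (c *s z) = c * cinner x z"
  by (simp add: cinner_def sum_distrib_left mult_ac)

lemma cinner_zero_left [simp]: "cinner 0 z = 0"
  by (simp add: cinner_def)

lemma cinner_zero_right [simp]: "cinner z 0 = 0"
  by (simp add: cinner_def)

lemma cinner_sum_left: "finite A \<Longrightarrow> cinner (\<Sum>a\<in>A. f a) z = (\<Sum>a\<in>A. cinner (f a) z)"
  by (induct A rule: finite_induct) (auto simp: cinner_add_left)

lemma cinner_sum_right: "finite A \<Longrightarrow> cinner z (\<Sum>a\<in>A. f a) = (\<Sum>a\<in>A. cinner z (f a))"
  by (induct A rule: finite_induct) (auto simp: cinner_add_right)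

lemma cinner_self: "cinner x x = of_real ((norm x)\<^sup>2)"
proof -
  have "cnj z * z = (complex_of_real (cmod z))\<^sup>2" for z
    by (metis complex_norm_square of_real_power mult.commute)
  then show ?thesis
    by (simp add: cinner_def norm_vec_def L2_set_def sum_nonneg)
qed

lemma cinner_adjoint_right: "cinner x (A *v y) = cinner (adjoint_mat A *v x) y"
  unfolding cinner_def matrix_vector_mult_def adjoint_mat_def
  by (simp add: sum_distrib_left sum_distrib_right cnj_sum) (subst sum.swap, simp add: mult_ac)

lemma matrix_vector_mult_scaleR_right: "(A::complex^'d^'d) *v (r *\<^sub>R x) = r *\<^sub>R (A *v x)"
  by (rule linear_scale[OF matrix_vector_mul_linear])

lemma matrix_vector_mult_smult_right: "(A::complex^'d^'d) *v (c *s x) = c *s (A *v x)"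
  by (simp add: vec_eq_iff matrix_vector_mult_def algebra_simps sum_distrib_left)

lemma matrix_vector_mult_sum_left:
  "finite I \<Longrightarrow> (\<Sum>m\<in>I. A m) *v (x::complex^'d) = (\<Sum>m\<in>I. A m *v x)"
  by (induct I rule: finite_induct) (auto simp: matrix_vector_mult_add_rdistrib)

lemma cinner_eq_sum_POVM:
  assumes "is_POVM I M"
  shows "cinner x y = (\<Sum>m\<in>I. cinner x (M m *v y))"
proof -
  have "y = (\<Sum>m\<in>I. M m *v y)"
    using assms matrix_vector_mult_sum_left[of I M y] by (simp add: is_POVM_def)
  then show ?thesis
    using assms cinner_sum_right unfolding is_POVM_def by metis
qed

lemma sum_UNIV_Plus:
  fixes f :: "'a::finite + 'b::finite \<Rightarrow> 'c::comm_monoid_add"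
  shows "(\<Sum>k\<in>UNIV. f k) = (\<Sum>k\<in>UNIV. f (Inl k)) + (\<Sum>k\<in>UNIV. f (Inr k))"
  by (subst UNIV_Plus_UNIV[symmetric]) (simp add: sum.Plus comp_def del: UNIV_Plus_UNIV)

lemma card_le_DIM_of_independent_family:
  fixes g :: "'q::finite \<Rightarrow> 'a::euclidean_space"
  assumes indep: "\<And>f. (\<Sum>q\<in>UNIV. f q *\<^sub>R g q) = 0 \<Longrightarrow> \<forall>q. f q = 0"
  shows "CARD('q) \<le> DIM('a)"
proof -
  have "inj g"
  proof (rule injI, rule ccontr)
    fix q1 q2
    assume eq: "g q1 = g q2" and ne: "q1 \<noteq> q2"
    define f where "f q = (if q = q1 then 1 else if q = q2 then -1 else 0::real)" for q
    have "(\<Sum>q\<in>UNIV. f q *\<^sub>R g q) = (\<Sum>q\<in>{q1, q2}. f q *\<^sub>R g q)"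
      by (rule sum.mono_neutral_right) (auto simp: f_def)
    also have "\<dots> = 0"
      using eq ne by (simp add: f_def)
    finally have "f q1 = 0"
      using indep by blast
    then show False
      by (simp add: f_def)
  qed
  have "independent (range g)"
  proof (rule independent_if_scalars_zero)
    fix c x
    assume "(\<Sum>x\<in>range g. c x *\<^sub>R x) = 0" and "x \<in> range g"
    then show "c x = 0"
      using indep[of "c \<circ> g"] by (auto simp: sum.reindex[OF \<open>inj g\<close>])
  qed simp
  then have "card (range g) \<le> DIM('a)"
    by (rule independent_bound[THEN conjunct2])
  with \<open>inj g\<close> show ?thesis
    by (simp add: card_image)
qed

lemma card_le_if_real_gram_and_independent:
  fixes u :: "'k::finite \<Rightarrow> complex^'d"
  assumes gram: "\<And>k l. Im (cinner (u k) (u l)) = 0"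
    and indep: "\<And>f. (\<Sum>k\<in>UNIV. f k *\<^sub>R u k) = 0 \<Longrightarrow> \<forall>k. f k = 0"
  shows "CARD('k) \<le> CARD('d)"
proof -
  \<comment> \<open>A real relation X + \<i> Y = 0 with X, Y in the real span of u gives
    \<langle>X, X\<rangle> = -\<i> \<langle>X, Y\<rangle>, which is purely imaginary because the Gram matrix is real; so X = Y = 0.\<close>
  define g where "g = case_sum u (\<lambda>k. \<i> *s u k)"
  have "\<forall>q. f q = 0" if f: "(\<Sum>q\<in>UNIV. f q *\<^sub>R g q) = 0" for f
  proof -
    define X where "X = (\<Sum>k\<in>UNIV. f (Inl k) *\<^sub>R u k)"
    define Y where "Y = (\<Sum>k\<in>UNIV. f (Inr k) *\<^sub>R u k)"
    have "X + \<i> *s Y = 0"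
      using f by (simp add: g_def X_def Y_def sum_UNIV_Plus vec_eq_iff sum_distrib_left mult_ac)
    then have XY: "X = (- \<i>) *s Y"
      by (simp add: add_eq_0_iff2 vector_smult_lneg)
    have "Im (cinner X Y) = 0"
      by (simp add: X_def Y_def cinner_sum_left cinner_sum_right cinner_scaleR_left
          cinner_scaleR_right Im_sum gram)
    moreover have "cinner X X = - \<i> * cinner X Y"
      by (subst (2) XY) (simp only: cinner_smult_right)
    ultimately have "Re (cinner X X) = 0"
      by simp
    then have "X = 0"
      by (simp add: cinner_self)
    moreover from this have "Y = 0"
      using XY by (simp add: vec_eq_iff)
    ultimately show ?thesis
      using indep[of "\<lambda>k. f (Inl k)"] indep[of "\<lambda>k. f (Inr k)"]
      unfolding X_def Y_def by (metis sumE)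
  qed
  then have "CARD('k + 'k) \<le> DIM(complex^'d)"
    by (rule card_le_DIM_of_independent_family)
  then show ?thesis
    by simp
qed

section \<open>Positive semidefinite forms\<close>

lemma psd_mat_form:
  assumes "psd_mat M"
  shows "Im (cinner x (M *v x)) = 0" and "0 \<le> Re (cinner x (M *v x))"
proof -
  have "(\<Sum>i\<in>UNIV. \<Sum>j\<in>UNIV. cnj (x $ i) * M $ i $ j * x $ j) = cinner x (M *v x)"
    by (simp add: cinner_def matrix_vector_mult_def sum_distrib_left mult_ac)
  with assms show "Im (cinner x (M *v x)) = 0" "0 \<le> Re (cinner x (M *v x))"
    unfolding psd_mat_def Let_def by (metis (no_types))+
qed

lemma psd_mat_form_cnj:
  assumes M: "psd_mat M"
  shows "cinner x (M *v y) = cnj (cinner y (M *v x))"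
proof -
  define a where "a = cinner x (M *v y)"
  define b where "b = cinner y (M *v x)"
  have sum: "cinner (x + y) (M *v (x + y)) = cinner x (M *v x) + a + b + cinner y (M *v y)"
    by (simp add: a_def b_def matrix_vector_right_distrib cinner_add_left cinner_add_right)
  have im: "Im (a + b) = 0"
    using psd_mat_form(1)[OF M, of "x + y"] psd_mat_form(1)[OF M, of x] psd_mat_form(1)[OF M, of y]
    unfolding sum by simp
  have rot: "cinner (x + \<i> *s y) (M *v (x + \<i> *s y))
      = cinner x (M *v x) + \<i> * a - \<i> * b + cinner y (M *v y)"
    by (simp add: a_def b_def matrix_vector_right_distrib matrix_vector_mult_smult_right
        cinner_add_left cinner_add_right cinner_smult_left cinner_smult_right algebra_simps)
  have re: "Re (a - b) = 0"
    using psd_mat_form(1)[OF M, of "x + \<i> *s y"] psd_mat_form(1)[OF M, of x]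
      psd_mat_form(1)[OF M, of y]
    unfolding rot by simp
  from im re show ?thesis
    by (simp add: a_def b_def complex_eq_iff)
qed

lemma psd_mat_form_diff:
  assumes M: "psd_mat M"
  shows "Re (cinner (x - t *\<^sub>R y) (M *v (x - t *\<^sub>R y)))
     = Re (cinner x (M *v x)) - 2 * t * Re (cinner y (M *v x)) + t\<^sup>2 * Re (cinner y (M *v y))"
proof -
  have "cinner (x - t *\<^sub>R y) (M *v (x - t *\<^sub>R y)) =
     cinner x (M *v x) - of_real t * cinner x (M *v y) - of_real t * cinner y (M *v x)
       + of_real t * of_real t * cinner y (M *v y)"
    by (simp add: matrix_vector_mult_diff_distrib matrix_vector_mult_scaleR_right cinner_diff_left
        cinner_diff_right cinner_scaleR_left cinner_scaleR_right algebra_simps)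
  then show ?thesis
    by (simp add: psd_mat_form_cnj[OF M, of x y] power2_eq_square)
qed

lemma psd_mat_mult_eq_0_if_form_eq_0:
  assumes M: "psd_mat M" and x: "cinner x (M *v x) = 0"
  shows "M *v x = 0"
proof -
  have "Re (cinner y (M *v x)) = 0" for y
  proof -
    define g where "g = Re (cinner y (M *v x))"
    define R where "R = Re (cinner y (M *v y))"
    \<comment> \<open>t \<mapsto> \<langle>x - t y, M (x - t y)\<rangle> is a nonnegative quadratic without constant term,
      so its linear coefficient g must vanish; this t makes it negative otherwise.\<close>
    define t where "t = g / (R + 1)"
    have R: "0 \<le> R"
      using psd_mat_form(2)[OF M] by (simp add: R_def)
    have "0 \<le> Re (cinner (x - t *\<^sub>R y) (M *v (x - t *\<^sub>R y)))"
      using psd_mat_form(2)[OF M] .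
    also have "\<dots> = t * (t * R - 2 * g)"
      unfolding psd_mat_form_diff[OF M] by (simp add: x g_def R_def power2_eq_square algebra_simps)
    also have "\<dots> = - g\<^sup>2 * (R + 2) / (R + 1)\<^sup>2"
      using R by (simp add: t_def field_simps power2_eq_square)
    finally have "g\<^sup>2 * (R + 2) \<le> 0"
      using R by (simp add: divide_le_0_iff mult_le_0_iff)
    with R show ?thesis
      by (simp add: g_def mult_le_0_iff)
  qed
  from this[of "M *v x"] show ?thesis
    by (simp add: cinner_self)
qed

lemma psd_mat_cauchy_schwarz:
  assumes M: "psd_mat M"
  shows "(Re (cinner v (M *v b)))\<^sup>2 / Re (cinner v (M *v v)) \<le> Re (cinner b (M *v b))"
proof (cases "Re (cinner v (M *v v)) = 0")
  case True
  then show ?thesis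
    using psd_mat_form(2)[OF M] by simp
next
  case False
  define p where "p = Re (cinner v (M *v v))"
  define g where "g = Re (cinner v (M *v b))"
  have p: "0 < p"
    using False psd_mat_form(2)[OF M, of v] by (simp add: p_def)
  have "0 \<le> Re (cinner (b - (g / p) *\<^sub>R v) (M *v (b - (g / p) *\<^sub>R v)))"
    using psd_mat_form(2)[OF M] .
  also have "\<dots> = Re (cinner b (M *v b)) - g\<^sup>2 / p"
    unfolding psd_mat_form_diff[OF M] p_def[symmetric] g_def[symmetric]
    using p by (simp add: field_simps power2_eq_square)
  finally show ?thesis
    by (simp add: p_def g_def)
qed

lemma psd_mat_cauchy_schwarz_eq:
  assumes M: "psd_mat M"
    and eq: "(Re (cinner v (M *v b)))\<^sup>2 / Re (cinner v (M *v v)) = Re (cinner b (M *v b))"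
  shows "M *v b = (Re (cinner v (M *v b)) / Re (cinner v (M *v v))) *\<^sub>R (M *v v)"
proof -
  define p where "p = Re (cinner v (M *v v))"
  define g where "g = Re (cinner v (M *v b))"
  define w where "w = b - (g / p) *\<^sub>R v"
  have "Re (cinner w (M *v w)) = Re (cinner b (M *v b)) - 2 * (g / p) * g + (g / p)\<^sup>2 * p"
    unfolding w_def psd_mat_form_diff[OF M] p_def g_def ..
  \<comment> \<open>If p = 0 then eq says Re \<langle>b, M b\<rangle> = 0 and the coefficient g / p is 0 as well.\<close>
  also have "\<dots> = 0"
    using eq[folded p_def g_def, symmetric] by (cases "p = 0") (simp_all add: field_simps power2_eq_square)
  finally have "cinner w (M *v w) = 0"
    using psd_mat_form(1)[OF M, of w] by (simp add: complex_eq_iff)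
  then have "M *v w = 0"
    by (rule psd_mat_mult_eq_0_if_form_eq_0[OF M])
  then show ?thesis
    by (simp add: w_def p_def g_def matrix_vector_mult_diff_distrib matrix_vector_mult_scaleR_right)
qed

lemma sum_psd_mat_cauchy_schwarz_eq:
  assumes "finite I" and M: "\<And>m. m \<in> I \<Longrightarrow> psd_mat (M m)"
    and eq: "(\<Sum>m\<in>I. (Re (cinner v (M m *v b)))\<^sup>2 / Re (cinner v (M m *v v)))
      = (\<Sum>m\<in>I. Re (cinner b (M m *v b)))"
    and m: "m \<in> I"
  shows "M m *v b = (Re (cinner v (M m *v b)) / Re (cinner v (M m *v v))) *\<^sub>R (M m *v v)"
proof (rule psd_mat_cauchy_schwarz_eq[OF M[OF m]])
  show "(Re (cinner v (M m *v b)))\<^sup>2 / Re (cinner v (M m *v v)) = Re (cinner b (M m *v b))"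
  proof (rule ccontr)
    assume "(Re (cinner v (M m *v b)))\<^sup>2 / Re (cinner v (M m *v v)) \<noteq> Re (cinner b (M m *v b))"
    then have "(Re (cinner v (M m *v b)))\<^sup>2 / Re (cinner v (M m *v v)) < Re (cinner b (M m *v b))"
      using psd_mat_cauchy_schwarz[OF M[OF m]] by (simp add: order_less_le)
    then have "(\<Sum>m\<in>I. (Re (cinner v (M m *v b)))\<^sup>2 / Re (cinner v (M m *v v)))
      < (\<Sum>m\<in>I. Re (cinner b (M m *v b)))"
      using assms(1) m psd_mat_cauchy_schwarz[OF M] by (intro sum_strict_mono_ex1) auto
    with eq show False
      by simp
  qed
qed

lemma Im_cinner_eq_0_if_POVM_proportional:
  assumes POVM: "is_POVM I M"
    and x: "\<forall>m\<in>I. \<exists>r. M m *v x = r *\<^sub>R (M m *v v)"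
    and y: "\<forall>m\<in>I. \<exists>s. M m *v y = s *\<^sub>R (M m *v v)"
  shows "Im (cinner x y) = 0"
proof -
  have "Im (cinner x (M m *v y)) = 0" if m: "m \<in> I" for m
  proof -
    have M: "psd_mat (M m)"
      using POVM m by (simp add: is_POVM_def)
    obtain r s where r: "M m *v x = r *\<^sub>R (M m *v v)" and s: "M m *v y = s *\<^sub>R (M m *v v)"
      using x y m by blast
    have "cinner x (M m *v y) = of_real s * cnj (cinner v (M m *v x))"
      by (simp add: s cinner_scaleR_right psd_mat_form_cnj[OF M, of x v])
    also have "\<dots> = of_real s * of_real r * cnj (cinner v (M m *v v))"
      by (simp add: r cinner_scaleR_right)
    finally show ?thesis
      using psd_mat_form(1)[OF M, of v] by simp
  qed
  then show ?thesis
    by (simp add: cinner_eq_sum_POVM[OF POVM, of x y] Im_sum)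
qed

section \<open>Rank-one projectors and their derivatives\<close>

lemma trace_ket_bra_mult: "trace (ket_bra v ** A) = cinner v (A *v v)"
  unfolding cinner_def matrix_vector_mult_def ket_bra_def trace_def matrix_matrix_mult_def
  by (simp add: sum_distrib_left sum_distrib_right mult_ac) (rule sum.swap)

lemma trace_ket_bra: "trace (ket_bra v) = cinner v v"
  unfolding cinner_def ket_bra_def trace_def by (simp add: mult.commute)

lemma adjoint_ket_bra: "adjoint_mat (ket_bra v) = ket_bra v"
  unfolding adjoint_mat_def ket_bra_def by (simp add: vec_eq_iff mult.commute)

lemma ket_bra_idempotent:
  assumes "cinner v v = 1"
  shows "ket_bra v ** ket_bra v = ket_bra v"
proof -
  have "(\<Sum>k\<in>UNIV. v$i * cnj (v$k) * (v$k * cnj (v$j))) = v$i * cnj (v$j) * cinner v v" for i j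
    by (simp add: cinner_def sum_distrib_left mult_ac)
  with assms show ?thesis
    by (simp add: ket_bra_def matrix_matrix_mult_def vec_eq_iff)
qed

lemma ket_bra_mult: "ket_bra v ** A = (\<chi> i k. v$i * cnj ((adjoint_mat A *v v)$k))"
  unfolding matrix_vector_mult_def ket_bra_def adjoint_mat_def matrix_matrix_mult_def
  by (simp add: sum_distrib_left mult_ac vec_eq_iff)

lemma mult_ket_bra: "A ** ket_bra v = (\<chi> i k. (A *v v)$i * cnj (v$k))"
  unfolding matrix_vector_mult_def ket_bra_def matrix_matrix_mult_def
  by (auto simp: vec_eq_iff sum_distrib_right intro!: sum.cong)

definition sym_outer :: "complex^'d \<Rightarrow> complex^'d \<Rightarrow> complex^'d^'d" where
  "sym_outer v w = (\<chi> i k. v$i * cnj (w$k) + w$i * cnj (v$k))"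

lemma ket_bra_anticommutator:
  assumes "hermitian_mat L"
  shows "ket_bra v ** L + L ** ket_bra v = sym_outer v (L *v v)"
proof -
  have L: "adjoint_mat L = L"
    using assms by (simp add: hermitian_mat_def)
  show ?thesis
    unfolding ket_bra_mult mult_ket_bra sym_outer_def L by (simp add: vec_eq_iff)
qed

lemma linear_sym_outer: "linear (sym_outer v)"
  by (rule linearI) (simp_all add: sym_outer_def vec_eq_iff complex_cnj_scaleR algebra_simps)

lemma sym_outer_self: "sym_outer v v = 2 *\<^sub>R ket_bra v"
  by (simp add: sym_outer_def ket_bra_def vec_eq_iff scaleR_conv_of_real)

lemma matrix_add_rdistrib: "((A + B) ** (C::complex^'d^'d)) = A ** C + B ** C"
  by (simp add: vec_eq_iff matrix_matrix_mult_def distrib_right sum.distrib)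

lemma bounded_bilinear_matrix_mult:
  "bounded_bilinear ((**) :: complex^'d^'d \<Rightarrow> complex^'d^'d \<Rightarrow> complex^'d^'d)"
  unfolding bilinear_conv_bounded_bilinear[symmetric] bilinear_def
  by (auto intro!: linearI simp: matrix_add_ldistrib matrix_add_rdistrib
      scalar_matrix_assoc[symmetric] matrix_scalar_ac)

lemma linear_adjoint_mat: "linear (adjoint_mat :: complex^'d^'d \<Rightarrow> complex^'d^'d)"
  by (rule linearI) (simp_all add: adjoint_mat_def vec_eq_iff)

lemma trace_scaleR: "trace (r *\<^sub>R (A::complex^'d^'d)) = r *\<^sub>R trace A"
  unfolding trace_def vector_scaleR_component by (simp add: scaleR_sum_right)

lemma linear_trace: "linear (trace :: complex^'d^'d \<Rightarrow> complex)"
  by (rule linearI) (simp_all add: trace_add trace_scaleR)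

lemma has_derivative_unique_on_open:
  assumes "(f has_derivative D) (at \<theta>)" and "(g has_derivative E) (at \<theta>)"
    and "open \<Theta>" and "\<theta> \<in> \<Theta>" and "\<And>s. s \<in> \<Theta> \<Longrightarrow> f s = g s"
  shows "D = E"
proof -
  have "(f has_derivative E) (at \<theta>)"
    by (rule has_derivative_transform_within_open[OF assms(2-4)]) (simp add: assms(5))
  with assms(1) show ?thesis
    by (rule has_derivative_unique)
qed

lemma derivative_of_projector_family:
  fixes \<rho> :: "'a::real_normed_vector \<Rightarrow> complex^'d^'d"
  assumes D: "(\<rho> has_derivative D) (at \<theta>)" and \<Theta>: "open \<Theta>" "\<theta> \<in> \<Theta>"
    and proj: "\<And>s. s \<in> \<Theta> \<Longrightarrow> hermitian_mat (\<rho> s) \<and> \<rho> s ** \<rho> s = \<rho> s \<and> trace (\<rho> s) = 1"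
  shows "hermitian_mat (D h)" and "D h = \<rho> \<theta> ** D h + D h ** \<rho> \<theta>" and "trace (D h) = 0"
proof -
  have "((\<lambda>s. adjoint_mat (\<rho> s)) has_derivative (\<lambda>h. adjoint_mat (D h))) (at \<theta>)"
    using linear_adjoint_mat[unfolded linear_conv_bounded_linear] D
    by (rule bounded_linear.has_derivative)
  from has_derivative_unique_on_open[OF D this \<Theta>]
  have "D = (\<lambda>h. adjoint_mat (D h))"
    using proj by (simp add: hermitian_mat_def)
  then show "hermitian_mat (D h)"
    by (simp add: hermitian_mat_def fun_eq_iff)
  have "((\<lambda>s. \<rho> s ** \<rho> s) has_derivative (\<lambda>h. \<rho> \<theta> ** D h + D h ** \<rho> \<theta>)) (at \<theta>)"
    by (rule bounded_bilinear.FDERIV[OF bounded_bilinear_matrix_mult D D])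
  from has_derivative_unique_on_open[OF D this \<Theta>]
  have "D = (\<lambda>h. \<rho> \<theta> ** D h + D h ** \<rho> \<theta>)"
    using proj by simp
  then show "D h = \<rho> \<theta> ** D h + D h ** \<rho> \<theta>"
    by (simp add: fun_eq_iff)
  have "((\<lambda>s. trace (\<rho> s)) has_derivative (\<lambda>h. trace (D h))) (at \<theta>)"
    using linear_trace[unfolded linear_conv_bounded_linear] D
    by (rule bounded_linear.has_derivative)
  from has_derivative_unique_on_open[OF this has_derivative_const \<Theta>]
  have "(\<lambda>h. trace (D h)) = (\<lambda>h. 0)"
    using proj by simp
  then show "trace (D h) = 0"
    by (simp add: fun_eq_iff)
qed

section \<open>Fisher and SLD information of pure states\<close>

lemma partial_deriv_eq_derivative:
  "(\<rho> has_derivative D) (at \<theta>) \<Longrightarrow> partial_deriv \<rho> \<theta> j = D (axis j 1)"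
  by (simp add: partial_deriv_def frechet_derivative_at[symmetric])

lemma is_SLD_SLD: "is_SLD \<rho> \<theta> j L \<Longrightarrow> is_SLD \<rho> \<theta> j (SLD \<rho> \<theta> j)"
  unfolding SLD_def by (rule someI)

lemma is_SLD_double_partial_deriv:
  assumes herm: "hermitian_mat (partial_deriv \<rho> \<theta> j)"
    and eq: "partial_deriv \<rho> \<theta> j = \<rho> \<theta> ** partial_deriv \<rho> \<theta> j + partial_deriv \<rho> \<theta> j ** \<rho> \<theta>"
  shows "is_SLD \<rho> \<theta> j (2 *\<^sub>R partial_deriv \<rho> \<theta> j)"
proof -
  let ?E = "partial_deriv \<rho> \<theta> j"
  have "adjoint_mat (2 *\<^sub>R ?E) = 2 *\<^sub>R ?E"
    using herm by (simp add: hermitian_mat_def linear_scale[OF linear_adjoint_mat])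
  moreover have "(1/2::real) *\<^sub>R (\<rho> \<theta> ** (2 *\<^sub>R ?E) + (2 *\<^sub>R ?E) ** \<rho> \<theta>) = ?E"
    by (subst eq) (simp add: matrix_scalar_ac scalar_matrix_assoc[symmetric] scaleR_add_right)
  ultimately show ?thesis
    unfolding is_SLD_def hermitian_mat_def by simp
qed

lemma pure_state_family_SLD:
  fixes \<psi> :: "real^'p \<Rightarrow> complex^'d"
  defines "\<rho> \<equiv> \<lambda>s. ket_bra (\<psi> s)"
  assumes D: "(\<rho> has_derivative D) (at \<theta>)" and \<Theta>: "open \<Theta>" "\<theta> \<in> \<Theta>"
    and norm: "\<forall>t\<in>\<Theta>. norm (\<psi> t) = 1"
  shows "is_SLD \<rho> \<theta> j (SLD \<rho> \<theta> j)"
    and "partial_deriv \<rho> \<theta> j = (1/2::real) *\<^sub>R sym_outer (\<psi> \<theta>) (SLD \<rho> \<theta> j *v \<psi> \<theta>)"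
    and "trace (partial_deriv \<rho> \<theta> j) = 0"
proof -
  have "hermitian_mat (\<rho> s) \<and> \<rho> s ** \<rho> s = \<rho> s \<and> trace (\<rho> s) = 1" if "s \<in> \<Theta>" for s
    using norm that
    by (simp add: \<rho>_def hermitian_mat_def adjoint_ket_bra ket_bra_idempotent trace_ket_bra cinner_self)
  note d\<rho> = derivative_of_projector_family[OF D \<Theta> this]
  show SLD: "is_SLD \<rho> \<theta> j (SLD \<rho> \<theta> j)"
    using d\<rho>(1,2)
    by (intro is_SLD_SLD[OF is_SLD_double_partial_deriv]) (simp_all add: partial_deriv_eq_derivative[OF D])
  show "partial_deriv \<rho> \<theta> j = (1/2::real) *\<^sub>R sym_outer (\<psi> \<theta>) (SLD \<rho> \<theta> j *v \<psi> \<theta>)"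
    using SLD by (simp add: is_SLD_def ket_bra_anticommutator \<rho>_def)
  show "trace (partial_deriv \<rho> \<theta> j) = 0"
    by (simp add: partial_deriv_eq_derivative[OF D] d\<rho>(3))
qed

lemma bounded_linear_Re_trace_mult:
  "bounded_linear (\<lambda>X::complex^'d^'d. Re (trace (X ** M)))"
  unfolding linear_conv_bounded_linear[symmetric]
  by (rule linearI) (simp_all add: trace_add matrix_add_rdistrib scalar_matrix_assoc[symmetric] trace_scaleR)

lemma trace_mult_ket_bra_mult: "trace ((A ** ket_bra v) ** B) = cinner v ((B ** A) *v v)"
proof -
  have "trace ((A ** ket_bra v) ** B) = trace (B ** (A ** ket_bra v))"
    by (rule trace_mul_sym)
  also have "\<dots> = trace ((B ** A) ** ket_bra v)"
    by (simp only: matrix_mul_assoc)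
  also have "\<dots> = trace (ket_bra v ** (B ** A))"
    by (rule trace_mul_sym)
  finally show ?thesis
    by (simp only: trace_ket_bra_mult)
qed

lemma Re_trace_anticommutator_mult:
  assumes L: "hermitian_mat L" and M: "psd_mat M"
  shows "Re (trace (((1/2::real) *\<^sub>R (ket_bra v ** L + L ** ket_bra v)) ** M))
       = Re (cinner v (M *v (L *v v)))"
proof -
  have L': "adjoint_mat L = L"
    using L by (simp add: hermitian_mat_def)
  have "trace ((ket_bra v ** L) ** M) = cinner v (L *v (M *v v))"
    by (simp add: matrix_mul_assoc[symmetric] trace_ket_bra_mult matrix_vector_mul_assoc)
  also have "\<dots> = cnj (cinner v (M *v (L *v v)))"
    unfolding cinner_adjoint_right[of v L] L' by (rule psd_mat_form_cnj[OF M])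
  finally have PL: "trace ((ket_bra v ** L) ** M) = cnj (cinner v (M *v (L *v v)))" .
  have LP: "trace ((L ** ket_bra v) ** M) = cinner v (M *v (L *v v))"
    by (simp add: trace_mult_ket_bra_mult matrix_vector_mul_assoc)
  show ?thesis
    by (simp add: scalar_matrix_assoc[symmetric] matrix_add_rdistrib trace_add trace_scaleR PL LP)
qed

lemma outcome_prob_ket_bra:
  "\<rho> \<theta> = ket_bra v \<Longrightarrow> outcome_prob \<rho> M m \<theta> = Re (cinner v (M m *v v))"
  by (simp add: outcome_prob_def trace_ket_bra_mult)

lemma partial_deriv_outcome_prob_ket_bra:
  assumes D: "(\<rho> has_derivative D) (at \<theta>)" and \<rho>: "\<rho> \<theta> = ket_bra v"
    and L: "is_SLD \<rho> \<theta> j L" and M: "psd_mat (M m)"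
  shows "partial_deriv (outcome_prob \<rho> M m) \<theta> j = Re (cinner v (M m *v (L *v v)))"
proof -
  have dP: "(outcome_prob \<rho> M m has_derivative (\<lambda>h. Re (trace (D h ** M m)))) (at \<theta>)"
    unfolding outcome_prob_def using bounded_linear_Re_trace_mult D
    by (rule bounded_linear.has_derivative)
  have "partial_deriv (outcome_prob \<rho> M m) \<theta> j = Re (trace (partial_deriv \<rho> \<theta> j ** M m))"
    by (simp add: partial_deriv_eq_derivative[OF dP] partial_deriv_eq_derivative[OF D])
  also have "\<dots> = Re (cinner v (M m *v (L *v v)))"
    using L Re_trace_anticommutator_mult[OF _ M] by (simp add: is_SLD_def \<rho>)
  finally show ?thesis .
qed

lemma fisher_info_diag_ket_bra:
  assumes D: "(\<rho> has_derivative D) (at \<theta>)" and \<rho>: "\<rho> \<theta> = ket_bra v"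
    and L: "is_SLD \<rho> \<theta> j L" and POVM: "is_POVM I M"
  shows "fisher_info \<rho> I M \<theta> j j
    = (\<Sum>m\<in>I. (Re (cinner v (M m *v (L *v v))))\<^sup>2 / Re (cinner v (M m *v v)))"
proof -
  have I: "finite I" and M: "\<And>m. m \<in> I \<Longrightarrow> psd_mat (M m)"
    using POVM by (auto simp: is_POVM_def)
  have "fisher_info \<rho> I M \<theta> j j
      = (\<Sum>m\<in>{m\<in>I. 0 < Re (cinner v (M m *v v))}.
           (Re (cinner v (M m *v (L *v v))))\<^sup>2 / Re (cinner v (M m *v v)))"
    unfolding fisher_info_def outcome_prob_ket_bra[where \<rho> = \<rho> and \<theta> = \<theta>, OF \<rho>]
    by (intro sum.cong refl)
      (auto simp: partial_deriv_outcome_prob_ket_bra[where \<rho> = \<rho> and \<theta> = \<theta> and M = M, OF D \<rho> L M]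
        power2_eq_square)
  \<comment> \<open>Outcomes of probability zero may be added back: their terms vanish because x / 0 = 0.\<close>
  also have "\<dots> = (\<Sum>m\<in>I. (Re (cinner v (M m *v (L *v v))))\<^sup>2 / Re (cinner v (M m *v v)))"
  proof (rule sum.mono_neutral_left[OF I])
    have "Re (cinner v (M m *v v)) = 0" if "m \<in> I" "\<not> 0 < Re (cinner v (M m *v v))" for m
      using psd_mat_form(2)[OF M[OF that(1)], of v] that(2) by linarith
    then show "\<forall>m\<in>I - {m\<in>I. 0 < Re (cinner v (M m *v v))}.
        (Re (cinner v (M m *v (L *v v))))\<^sup>2 / Re (cinner v (M m *v v)) = 0"
      by simp
  qed auto
  finally show ?thesis .
qed

lemma SLD_info_diag_ket_bra:
  assumes \<rho>: "\<rho> \<theta> = ket_bra v" and L: "hermitian_mat (SLD \<rho> \<theta> j)"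
  shows "SLD_info \<rho> \<theta> j j = Re (cinner (SLD \<rho> \<theta> j *v v) (SLD \<rho> \<theta> j *v v))"
proof -
  let ?L = "SLD \<rho> \<theta> j"
  have "trace (?L ** ket_bra v ** ?L) = cinner v (?L *v (?L *v v))"
    by (simp add: trace_mult_ket_bra_mult matrix_vector_mul_assoc)
  also have "\<dots> = cinner (?L *v v) (?L *v v)"
    using L by (simp add: cinner_adjoint_right hermitian_mat_def)
  finally show ?thesis
    by (simp add: SLD_info_def \<rho>)
qed

lemma fisher_info_eq_SLD_info_diag_imp_proportional:
  assumes D: "(\<rho> has_derivative D) (at \<theta>)" and \<rho>: "\<rho> \<theta> = ket_bra v"
    and L: "is_SLD \<rho> \<theta> j (SLD \<rho> \<theta> j)" and POVM: "is_POVM I M"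
    and eq: "fisher_info \<rho> I M \<theta> j j = SLD_info \<rho> \<theta> j j"
    and m: "m \<in> I"
  shows "\<exists>t. M m *v (SLD \<rho> \<theta> j *v v) = t *\<^sub>R (M m *v v)"
proof -
  let ?b = "SLD \<rho> \<theta> j *v v"
  have I: "finite I" and M: "\<And>m. m \<in> I \<Longrightarrow> psd_mat (M m)"
    using POVM by (auto simp: is_POVM_def)
  have "SLD_info \<rho> \<theta> j j = (\<Sum>m\<in>I. Re (cinner ?b (M m *v ?b)))"
    using L SLD_info_diag_ket_bra[where \<rho> = \<rho> and \<theta> = \<theta>, OF \<rho>] cinner_eq_sum_POVM[OF POVM, of ?b ?b]
    by (simp add: is_SLD_def Re_sum)
  with eq have "(\<Sum>m\<in>I. (Re (cinner v (M m *v ?b)))\<^sup>2 / Re (cinner v (M m *v v)))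
      = (\<Sum>m\<in>I. Re (cinner ?b (M m *v ?b)))"
    by (simp add: fisher_info_diag_ket_bra[OF D \<rho> L POVM])
  from sum_psd_mat_cauchy_schwarz_eq[OF I M this m] show ?thesis
    by blast
qed

lemma state_and_SLD_vectors_independent:
  fixes b :: "'p::finite \<Rightarrow> complex^'d" and E :: "'p \<Rightarrow> complex^'d^'d"
  assumes v: "cinner v v = 1"
    and E: "\<And>j. E j = (1/2::real) *\<^sub>R sym_outer v (b j)"
    and tr: "\<And>j. trace (E j) = 0"
    and indep: "\<And>c. (\<Sum>j\<in>UNIV. c j *\<^sub>R E j) = 0 \<Longrightarrow> \<forall>j. c j = 0"
    and comb: "(\<Sum>k\<in>UNIV. f k *\<^sub>R case_sum (\<lambda>_::unit. v) b k) = 0"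
  shows "\<forall>k. f k = 0"
proof -
  define a where "a = f (Inl ())"
  define c where "c j = f (Inr j)" for j
  have "a *\<^sub>R v + (\<Sum>j\<in>UNIV. c j *\<^sub>R b j) = 0"
    using comb by (simp add: sum_UNIV_Plus UNIV_unit a_def c_def)
  then have B: "(\<Sum>j\<in>UNIV. c j *\<^sub>R b j) = (- a) *\<^sub>R v"
    by (simp add: add_eq_0_iff)
  have "(\<Sum>j\<in>UNIV. c j *\<^sub>R E j) = (1/2::real) *\<^sub>R sym_outer v (\<Sum>j\<in>UNIV. c j *\<^sub>R b j)"
    by (simp add: E linear_sum[OF linear_sym_outer] linear_scale[OF linear_sym_outer] scaleR_sum_right)
  also have "\<dots> = (- a) *\<^sub>R ket_bra v"
    by (simp only: B linear_scale[OF linear_sym_outer] sym_outer_self scaleR_scaleR) simp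
  finally have S: "(\<Sum>j\<in>UNIV. c j *\<^sub>R E j) = (- a) *\<^sub>R ket_bra v" .
  have "trace (\<Sum>j\<in>UNIV. c j *\<^sub>R E j) = 0"
    by (simp add: linear_sum[OF linear_trace] trace_scaleR tr)
  then have "a = 0"
    by (simp add: S trace_scaleR trace_ket_bra v del: scaleR_minus_left)
  moreover from this have "\<forall>j. c j = 0"
    using S indep[of c] by simp
  ultimately show ?thesis
    unfolding a_def c_def by (metis unit.exhaust sumE)
qed

theorem theorem4p3:
  fixes \<Theta> :: "(real^'p) set"
    and \<psi> :: "real^'p \<Rightarrow> complex^'d"
    and \<theta> :: "real^'p"
    and I :: "'m set" and M :: "'m \<Rightarrow> complex^'d^'d"
  assumes "open \<Theta>"
    and "\<forall>t\<in>\<Theta>. norm (\<psi> t) = 1"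
    and "\<forall>t\<in>\<Theta>. (\<lambda>s. ket_bra (\<psi> s)) differentiable (at t)"
    and "nondegenerate (\<lambda>s. ket_bra (\<psi> s)) \<Theta>"
    and "\<theta> \<in> \<Theta>"
    and "is_POVM I M"
    and "fisher_info (\<lambda>s. ket_bra (\<psi> s)) I M \<theta> = SLD_info (\<lambda>s. ket_bra (\<psi> s)) \<theta>"
  shows "CARD('p) \<le> CARD('d) - 1"
proof -
  let ?\<rho> = "\<lambda>s. ket_bra (\<psi> s)"
  define v where "v = \<psi> \<theta>"
  define D where "D = frechet_derivative ?\<rho> (at \<theta>)"
  define u where "u = case_sum (\<lambda>_::unit. v) (\<lambda>j. SLD ?\<rho> \<theta> j *v v)"
  have D: "(?\<rho> has_derivative D) (at \<theta>)"
    using assms(3,5) by (simp add: D_def frechet_derivative_works)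
  note pure = pure_state_family_SLD[OF D assms(1,5,2), folded v_def]
  have proportional: "\<forall>m\<in>I. \<exists>t. M m *v u k = t *\<^sub>R (M m *v v)" for k
  proof (cases k)
    case (Inr j)
    have "fisher_info ?\<rho> I M \<theta> j j = SLD_info ?\<rho> \<theta> j j"
      using assms(7) by simp
    with Inr show ?thesis
      using fisher_info_eq_SLD_info_diag_imp_proportional[OF D _ pure(1) assms(6)]
      by (simp add: u_def v_def)
  qed (auto simp: u_def intro: exI[of _ 1])
  have gram: "Im (cinner (u k) (u l)) = 0" for k l
    by (rule Im_cinner_eq_0_if_POVM_proportional[OF assms(6) proportional proportional])
  have indep: "\<forall>k. f k = 0" if "(\<Sum>k\<in>UNIV. f k *\<^sub>R u k) = 0" for f
  proof (rule state_and_SLD_vectors_independent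
      [where E = "partial_deriv ?\<rho> \<theta>" and b = "\<lambda>j. SLD ?\<rho> \<theta> j *v v"])
    show "cinner v v = 1"
      using assms(2,5) by (simp add: v_def cinner_self)
    show "\<forall>j. c j = 0" if "(\<Sum>j\<in>UNIV. c j *\<^sub>R partial_deriv ?\<rho> \<theta> j) = 0" for c
      using assms(4,5) that by (simp add: nondegenerate_def)
  qed (use pure(2,3) that in \<open>simp_all add: u_def\<close>)
  have "CARD(unit + 'p) \<le> CARD('d)"
    using gram indep by (rule card_le_if_real_gram_and_independent)
  then show ?thesis
    by simp
qed

end
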